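(* Let $G_0=(V,E_0)$ and $G_1=(V,E_1)$ be strongly connected unweighted directed graphs on the same $n$-vertex set, let $n_p,n_q\ge1$ be integers, let $S_1\subseteq V$ with $|S_1|=n_p$, let $a\in V$, and let $S_2=N^{in}_{G_0}(a,n_q)$. Let $\ell_0=\max_{x\in V}d_{G_0}(S_1,x)$, let $\epsilon\in[0,1/2]$, and suppose that both $\max_{x\in V}d_{G_1}(S_1,x)$ and $d_{G_1}(S_1,a)$ lie in $[\ell_0(1-\epsilon),\ell_0(1+\epsilon)]$, and that $S_1\cap S_2\neq\emptyset$. Write $\delta=\mathrm{inecc}_{G_1}(a)$. Suppose moreover that either (i) $E_1\subseteq E_0$ and $d_{G_0}(S_1,a)\ge(1-\epsilon)\ell_0$; or (ii) $E_0\subseteq E_1$ and $\mathrm{inecc}_{G_1}(a)\ge(1-\epsilon)\,\mathrm{inecc}_{G_0}(a)$. Then for all reals $p,q>0$ with $p+q=1$, in the graph $G_1$ either $d_{G_1}(S_1,x)\le\lfloor(p+2\epsilon)\delta\rfloor$ for every $x\in V$, or $d_{G_1}(x,S_2)\le\lceil(q+2\epsilon)\delta\rceil$ for every $x\in V$.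
   Context: $d_G(u,v)$ is the directed shortest-path distance in $G$; $d_G(A,u)=\min_{v\in A}d_G(v,u)$, $d_G(u,A)=\min_{v\in A}d_G(u,v)$; $\mathrm{inecc}_G(a)=\max_{x}d_G(x,a)$. $N^{in}_G(a,\ell)$ denotes a set of $\ell$ vertices $x$ with the smallest values of $d_G(x,a)$ (ties broken arbitrarily), i.e. the $\ell$ closest incoming vertices of $a$. *)

theory Defs
  imports Main "HOL-Library.Library"
begin

definition digraph :: "'a set \<Rightarrow> ('a \<times> 'a) set \<Rightarrow> bool" where
  "digraph V E \<longleftrightarrow> finite V \<and> E \<subseteq> V \<times> V"

definition strongly_connected :: "'a set \<Rightarrow> ('a \<times> 'a) set \<Rightarrow> bool" where
  "strongly_connected V E \<longleftrightarrow> (\<forall>u\<in>V. \<forall>v\<in>V. (u, v) \<in> E\<^sup>*)"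

text \<open>Shortest-path distance: the least number of edges on a directed walk from u to v
  (meaningful when v is reachable from u, e.g. in a strongly connected graph).\<close>
definition gdist :: "('a \<times> 'a) set \<Rightarrow> 'a \<Rightarrow> 'a \<Rightarrow> nat" where
  "gdist E u v = (LEAST k. (u, v) \<in> E ^^ k)"

definition gdist_from_set :: "('a \<times> 'a) set \<Rightarrow> 'a set \<Rightarrow> 'a \<Rightarrow> nat" where
  "gdist_from_set E A u = Min ((\<lambda>v. gdist E v u) ` A)"

definition gdist_to_set :: "('a \<times> 'a) set \<Rightarrow> 'a \<Rightarrow> 'a set \<Rightarrow> nat" where
  "gdist_to_set E u A = Min ((\<lambda>v. gdist E u v) ` A)"

definition inecc :: "'a set \<Rightarrow> ('a \<times> 'a) set \<Rightarrow> 'a \<Rightarrow> nat" where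
  "inecc V E a = Max ((\<lambda>x. gdist E x a) ` V)"

text \<open>S is a valid choice of N^in(a,l): a set of l vertices with smallest d(x,a),
  ties broken arbitrarily.\<close>
definition is_N_in :: "'a set \<Rightarrow> ('a \<times> 'a) set \<Rightarrow> 'a \<Rightarrow> nat \<Rightarrow> 'a set \<Rightarrow> bool" where
  "is_N_in V E a l S \<longleftrightarrow> S \<subseteq> V \<and> card S = l \<and>
     (\<forall>x\<in>S. \<forall>y\<in>V - S. gdist E x a \<le> gdist E y a)"

end

theory Submission
  imports Defs
begin

(* Let l0, l1 be the eccentricities of S1 in G0, G1 and delta = inecc_G1(a). If some vertex has
   G1-distance more than (p + 2 eps) delta from S1, then l1 > (p + 2 eps) delta. Fix s in S1 and S2
   and put D = d_G0(s, a). Being a set of closest in-vertices of a in G0, S2 contains every vertex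
   at G0-distance < D from a. Hence on any walk of length k from y to a using edges of both graphs,
   the vertex min(k, D - 1) steps before a lies in S2, and d_G1(y, S2) <= k + 1 - D. In case (i) a
   shortest G1-walk has k <= delta and D >= d_G0(S1, a) >= (1 - eps) l0 >= (1 - eps) l1 / (1 + eps);
   in case (ii) a shortest G0-walk has (1 - eps) k <= delta and
   D >= d_G1(S1, a) >= (1 - eps) l0 >= (1 - eps) l1. Either way k - D < (q + 2 eps) delta. *)

lemma relpow_mono:
  fixes E F :: "('a \<times> 'a) set"
  shows "E \<subseteq> F \<Longrightarrow> E ^^ n \<subseteq> F ^^ n"
  by (induction n) (simp_all add: relcomp_mono)

lemma relpow_closed: "(u, v) \<in> E ^^ n \<Longrightarrow> E \<subseteq> V \<times> V \<Longrightarrow> u \<in> V \<Longrightarrow> v \<in> V"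
  by (induction n arbitrary: v) auto

lemma gdist_le: "(u, v) \<in> E ^^ k \<Longrightarrow> gdist E u v \<le> k"
  unfolding gdist_def by (rule Least_le)

lemma relpow_gdist: "(u, v) \<in> E\<^sup>* \<Longrightarrow> (u, v) \<in> E ^^ gdist E u v"
  unfolding gdist_def by (metis LeastI rtrancl_power)

lemma gdist_antimono:
  assumes "E \<subseteq> F" "(u, v) \<in> E\<^sup>*"
  shows "gdist F u v \<le> gdist E u v"
  using relpow_gdist[OF assms(2)] relpow_mono[OF assms(1)] by (blast intro: gdist_le)

lemma gdist_to_set_le: "finite A \<Longrightarrow> v \<in> A \<Longrightarrow> gdist_to_set E u A \<le> gdist E u v"
  unfolding gdist_to_set_def by simp

lemma gdist_from_set_le: "finite A \<Longrightarrow> v \<in> A \<Longrightarrow> gdist_from_set E A u \<le> gdist E v u"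
  unfolding gdist_from_set_def by simp

lemma gdist_from_set_antimono:
  assumes "finite A" "A \<noteq> {}" "E \<subseteq> F" "\<forall>v\<in>A. (v, u) \<in> E\<^sup>*"
  shows "gdist_from_set F A u \<le> gdist_from_set E A u"
proof -
  have "gdist_from_set E A u \<in> (\<lambda>v. gdist E v u) ` A"
    unfolding gdist_from_set_def using assms(1,2) by (intro Min_in) auto
  then obtain v where v: "v \<in> A" "gdist_from_set E A u = gdist E v u" by auto
  have "gdist_from_set F A u \<le> gdist F v u"
    using gdist_from_set_le[OF assms(1) v(1)] .
  also have "\<dots> \<le> gdist E v u"
    using gdist_antimono[OF assms(3)] assms(4) v(1) by blast
  finally show ?thesis using v(2) by simp
qed

definition ecc_from_set :: "'a set \<Rightarrow> ('a \<times> 'a) set \<Rightarrow> 'a set \<Rightarrow> nat" where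
  "ecc_from_set V E A = Max ((\<lambda>x. gdist_from_set E A x) ` V)"

lemma gdist_from_set_le_ecc: "finite V \<Longrightarrow> x \<in> V \<Longrightarrow> gdist_from_set E A x \<le> ecc_from_set V E A"
  unfolding ecc_from_set_def by simp

lemma ecc_from_set_gt_if_not_floor_bound:
  assumes "finite V" "\<not> (\<forall>x\<in>V. int (gdist_from_set E A x) \<le> \<lfloor>c\<rfloor>)"
  shows "c < real (ecc_from_set V E A)"
proof -
  obtain x where "x \<in> V" "c < real (gdist_from_set E A x)"
    using assms(2) by (auto simp: le_floor_iff not_le)
  with gdist_from_set_le_ecc[OF assms(1)] show ?thesis by (meson of_nat_mono less_le_trans)
qed

lemma ecc_from_set_antimono:
  assumes "finite V" "V \<noteq> {}" "strongly_connected V E" "E \<subseteq> F" "A \<subseteq> V" "A \<noteq> {}"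
  shows "ecc_from_set V F A \<le> ecc_from_set V E A"
proof -
  have "finite A" using assms(1,5) finite_subset by blast
  have "gdist_from_set F A x \<le> gdist_from_set E A x" if "x \<in> V" for x
    using assms(3,5,6) that \<open>finite A\<close> gdist_from_set_antimono[OF _ _ assms(4)]
    unfolding strongly_connected_def by blast
  with assms(1,2) show ?thesis
    unfolding ecc_from_set_def by (auto simp: Max_le_iff intro: le_trans[OF _ Max_ge])
qed

lemma gdist_le_inecc: "finite V \<Longrightarrow> x \<in> V \<Longrightarrow> gdist E x a \<le> inecc V E a"
  unfolding inecc_def by simp

lemma is_N_in_closed:
  assumes "is_N_in V E a l S" "s \<in> S" "z \<in> V" "gdist E z a < gdist E s a"
  shows "z \<in> S"
  using assms unfolding is_N_in_def by force

lemma gdist_to_N_in_le: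
  assumes "E0 \<subseteq> V \<times> V" "is_N_in V E0 a l S" "finite S" "s \<in> S" "(s, a) \<in> E0\<^sup>*"
    and "E \<subseteq> E0" "E \<subseteq> E1" "y \<in> V" "(y, a) \<in> E ^^ k"
  shows "gdist_to_set E1 y S \<le> k + 1 - gdist E0 s a"
proof (cases "gdist E0 s a = 0")
  case True
  \<comment> \<open>gdist is also 0 on unreachable pairs; reachability excludes this junk value\<close>
  then have "s = a" using relpow_gdist[OF assms(5)] by simp
  have "gdist_to_set E1 y S \<le> gdist E1 y a"
    using gdist_to_set_le[OF assms(3,4)] \<open>s = a\<close> by simp
  also have "\<dots> \<le> k"
    using assms(9) relpow_mono[OF assms(7)] by (blast intro: gdist_le)
  finally show ?thesis using True by simp
next
  case False
  define j where "j = min k (gdist E0 s a - 1)"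
  have "(y, a) \<in> E ^^ (k - j) O E ^^ j"
    using assms(9) by (simp add: j_def flip: relpow_add)
  then obtain z where yz: "(y, z) \<in> E ^^ (k - j)" and za: "(z, a) \<in> E ^^ j" by blast
  have "z \<in> V" using relpow_closed[OF yz] assms(1,6,8) by blast
  moreover have "gdist E0 z a < gdist E0 s a"
    using za relpow_mono[OF assms(6)] gdist_le[of z a j E0] False unfolding j_def by fastforce
  ultimately have "z \<in> S" by (rule is_N_in_closed[OF assms(2,4)])
  have "gdist_to_set E1 y S \<le> gdist E1 y z" by (rule gdist_to_set_le[OF assms(3) \<open>z \<in> S\<close>])
  also have "\<dots> \<le> k - j"
    using yz relpow_mono[OF assms(7)] by (blast intro: gdist_le)
  finally show ?thesis unfolding j_def by linarith
qed

lemma gdist_to_N_in_le_ceiling: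
  assumes "finite V" "E0 \<subseteq> V \<times> V" "is_N_in V E0 a l S" "s \<in> S" "(s, a) \<in> E0\<^sup>*"
    and "E \<subseteq> E0" "E \<subseteq> E1" "y \<in> V" "(y, a) \<in> E ^^ k"
    and "0 \<le> c" "real k - real (gdist E0 s a) < c"
  shows "int (gdist_to_set E1 y S) \<le> \<lceil>c\<rceil>"
proof -
  have "finite S" using assms(1,3) unfolding is_N_in_def by (blast intro: finite_subset)
  have "int k - int (gdist E0 s a) < \<lceil>c\<rceil>"
    using assms(11) by (simp add: less_ceiling_iff)
  moreover have "0 \<le> \<lceil>c\<rceil>" using assms(10) by simp
  moreover note gdist_to_N_in_le[OF assms(2,3) \<open>finite S\<close> assms(4-9)]
  ultimately show ?thesis by linarith
qed

lemma excess_bound_edge_deletion: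
  fixes \<epsilon> p q \<delta> L L' D k :: real
  assumes "0 \<le> \<epsilon>" "\<epsilon> \<le> 1/2" "p + q = 1" "0 < q" "0 \<le> \<delta>"
    and "(p + 2 * \<epsilon>) * \<delta> < L'" "L' \<le> L * (1 + \<epsilon>)" "(1 - \<epsilon>) * L \<le> D" "k \<le> \<delta>"
  shows "k - D < (q + 2 * \<epsilon>) * \<delta>"
proof -
  have q: "q = 1 - p" using assms(3) by simp
  have "(1 - \<epsilon>) * ((p + 2 * \<epsilon>) * \<delta>) < (1 - \<epsilon>) * (L * (1 + \<epsilon>))"
    using assms by (intro mult_strict_left_mono) auto
  have "(1 + \<epsilon>) * ((q + 2 * \<epsilon>) * \<delta>)
      = (1 + \<epsilon>) * \<delta> - (1 - \<epsilon>) * ((p + 2 * \<epsilon>) * \<delta>) + 2 * \<epsilon> * (2 - p) * \<delta>"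
    unfolding q by (simp add: algebra_simps)
  have "(1 + \<epsilon>) * (k - D) \<le> (1 + \<epsilon>) * (\<delta> - (1 - \<epsilon>) * L)"
    using assms by (intro mult_left_mono) auto
  also have "\<dots> = (1 + \<epsilon>) * \<delta> - (1 - \<epsilon>) * (L * (1 + \<epsilon>))"
    by (simp add: algebra_simps)
  also have "\<dots> < (1 + \<epsilon>) * \<delta> - (1 - \<epsilon>) * ((p + 2 * \<epsilon>) * \<delta>)"
    using \<open>(1 - \<epsilon>) * ((p + 2 * \<epsilon>) * \<delta>) < _\<close> by linarith
  also have "\<dots> \<le> (1 + \<epsilon>) * ((q + 2 * \<epsilon>) * \<delta>)"
    using \<open>(1 + \<epsilon>) * ((q + 2 * \<epsilon>) * \<delta>) = _\<close> assms by simp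
  finally show ?thesis using assms(1) by simp
qed

lemma excess_bound_edge_insertion:
  fixes \<epsilon> p q \<delta> L L' D k :: real
  assumes "0 \<le> \<epsilon>" "\<epsilon> \<le> 1/2" "p + q = 1" "0 < q" "0 \<le> \<delta>"
    and "(p + 2 * \<epsilon>) * \<delta> < L'" "L' \<le> L" "(1 - \<epsilon>) * L \<le> D" "(1 - \<epsilon>) * k \<le> \<delta>"
  shows "k - D < (q + 2 * \<epsilon>) * \<delta>"
proof -
  have q: "q = 1 - p" using assms(3) by simp
  have "(1 - \<epsilon>) * ((1 - \<epsilon>) * ((p + 2 * \<epsilon>) * \<delta>)) < (1 - \<epsilon>) * D"
  proof -
    have "(1 - \<epsilon>) * ((p + 2 * \<epsilon>) * \<delta>) < (1 - \<epsilon>) * L"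
      using assms by (intro mult_strict_left_mono) auto
    then have "(1 - \<epsilon>) * ((p + 2 * \<epsilon>) * \<delta>) < D" using assms(8) by linarith
    then show ?thesis using assms(2) by (intro mult_strict_left_mono) auto
  qed
  have "1 \<le> (1 - \<epsilon>) * (4 - p - 2 * \<epsilon>)"
    using assms mult_mono[of "1/2" "1 - \<epsilon>" 2 "4 - p - 2 * \<epsilon>"] by simp
  then have "0 \<le> \<epsilon> * ((1 - \<epsilon>) * (4 - p - 2 * \<epsilon>) - 1) * \<delta>"
    using assms by simp
  moreover have "(1 - \<epsilon>) * ((q + 2 * \<epsilon>) * \<delta>)
      = \<delta> - (1 - \<epsilon>) * ((1 - \<epsilon>) * ((p + 2 * \<epsilon>) * \<delta>))
        + \<epsilon> * ((1 - \<epsilon>) * (4 - p - 2 * \<epsilon>) - 1) * \<delta>"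
    unfolding q by (simp add: algebra_simps)
  ultimately have "\<delta> - (1 - \<epsilon>) * ((1 - \<epsilon>) * ((p + 2 * \<epsilon>) * \<delta>)) \<le> (1 - \<epsilon>) * ((q + 2 * \<epsilon>) * \<delta>)"
    by linarith
  moreover have "(1 - \<epsilon>) * (k - D) = (1 - \<epsilon>) * k - (1 - \<epsilon>) * D"
    by (simp add: algebra_simps)
  ultimately have "(1 - \<epsilon>) * (k - D) < (1 - \<epsilon>) * ((q + 2 * \<epsilon>) * \<delta>)"
    using assms(9) \<open>_ < (1 - \<epsilon>) * D\<close> by linarith
  then show ?thesis using assms(2) by simp
qed

lemma gdist_to_N_in_bound_edge_deletion:
  assumes G: "finite V" "E0 \<subseteq> V \<times> V" "strongly_connected V E0" "strongly_connected V E1"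
    and sub: "E1 \<subseteq> E0" and a: "a \<in> V" and S2: "is_N_in V E0 a l S2"
    and S1: "S1 \<subseteq> V" and s: "s \<in> S1" "s \<in> S2"
    and eps: "0 \<le> \<epsilon>" "\<epsilon> \<le> 1/2" and pq: "p + q = 1" "0 < q"
    and far: "(p + 2 * \<epsilon>) * real (inecc V E1 a) < real (ecc_from_set V E1 S1)"
    and ecc: "real (ecc_from_set V E1 S1) \<le> real (ecc_from_set V E0 S1) * (1 + \<epsilon>)"
    and dist_a: "(1 - \<epsilon>) * real (ecc_from_set V E0 S1) \<le> real (gdist_from_set E0 S1 a)"
    and y: "y \<in> V"
  shows "int (gdist_to_set E1 y S2) \<le> \<lceil>(q + 2 * \<epsilon>) * real (inecc V E1 a)\<rceil>"
proof -
  have "finite S1" using G(1) S1 by (rule finite_subset[rotated])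
  have reach: "(s, a) \<in> E0\<^sup>*" "(y, a) \<in> E1\<^sup>*"
    using G(3,4) a S1 s(1) y unfolding strongly_connected_def by blast+
  have "gdist_from_set E0 S1 a \<le> gdist E0 s a"
    using \<open>finite S1\<close> s(1) by (rule gdist_from_set_le)
  then have "(1 - \<epsilon>) * real (ecc_from_set V E0 S1) \<le> real (gdist E0 s a)"
    using dist_a by linarith
  moreover have "real (gdist E1 y a) \<le> real (inecc V E1 a)"
    using gdist_le_inecc[OF G(1) y] by simp
  ultimately have "real (gdist E1 y a) - real (gdist E0 s a) < (q + 2 * \<epsilon>) * real (inecc V E1 a)"
    using excess_bound_edge_deletion[OF eps pq _ far ecc] by simp
  then show ?thesis
    using gdist_to_N_in_le_ceiling[OF G(1,2) S2 s(2) reach(1) sub subset_refl y relpow_gdist[OF reach(2)]]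
      eps pq(2) by simp
qed

lemma gdist_to_N_in_bound_edge_insertion:
  assumes G: "finite V" "E0 \<subseteq> V \<times> V" "strongly_connected V E0"
    and sub: "E0 \<subseteq> E1" and a: "a \<in> V" and S2: "is_N_in V E0 a l S2"
    and S1: "S1 \<subseteq> V" and s: "s \<in> S1" "s \<in> S2"
    and eps: "0 \<le> \<epsilon>" "\<epsilon> \<le> 1/2" and pq: "p + q = 1" "0 < q"
    and far: "(p + 2 * \<epsilon>) * real (inecc V E1 a) < real (ecc_from_set V E1 S1)"
    and dist_a: "real (ecc_from_set V E0 S1) * (1 - \<epsilon>) \<le> real (gdist_from_set E1 S1 a)"
    and inecc: "(1 - \<epsilon>) * real (inecc V E0 a) \<le> real (inecc V E1 a)"
    and y: "y \<in> V"
  shows "int (gdist_to_set E1 y S2) \<le> \<lceil>(q + 2 * \<epsilon>) * real (inecc V E1 a)\<rceil>"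
proof -
  have "finite S1" using G(1) S1 by (rule finite_subset[rotated])
  have reach: "(s, a) \<in> E0\<^sup>*" "(y, a) \<in> E0\<^sup>*"
    using G(3) a S1 s(1) y unfolding strongly_connected_def by blast+
  have ecc: "ecc_from_set V E1 S1 \<le> ecc_from_set V E0 S1"
    using ecc_from_set_antimono[OF G(1) _ G(3) sub S1] a s(1) by blast
  have "gdist_from_set E1 S1 a \<le> gdist E1 s a"
    using \<open>finite S1\<close> s(1) by (rule gdist_from_set_le)
  also have "\<dots> \<le> gdist E0 s a"
    using sub reach(1) by (rule gdist_antimono)
  finally have "(1 - \<epsilon>) * real (ecc_from_set V E0 S1) \<le> real (gdist E0 s a)"
    using dist_a by (simp add: mult.commute)
  moreover have "(1 - \<epsilon>) * real (gdist E0 y a) \<le> (1 - \<epsilon>) * real (inecc V E0 a)"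
    using gdist_le_inecc[OF G(1) y] eps(2) by (intro mult_left_mono) auto
  then have "(1 - \<epsilon>) * real (gdist E0 y a) \<le> real (inecc V E1 a)"
    using inecc by linarith
  ultimately have "real (gdist E0 y a) - real (gdist E0 s a) < (q + 2 * \<epsilon>) * real (inecc V E1 a)"
    using excess_bound_edge_insertion[OF eps pq _ far, where L = "ecc_from_set V E0 S1"] ecc by simp
  then show ?thesis
    using gdist_to_N_in_le_ceiling[OF G(1,2) S2 s(2) reach(1) subset_refl sub y relpow_gdist[OF reach(2)]]
      eps pq(2) by simp
qed

theorem lemma3p3:
  fixes V :: "'a set" and E0 E1 :: "('a \<times> 'a) set"
    and n n_p n_q :: nat and S1 S2 :: "'a set" and a :: 'a
    and \<epsilon> :: real
  assumes G0: "digraph V E0" "strongly_connected V E0"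
      and G1: "digraph V E1" "strongly_connected V E1"
      and n: "card V = n"
      and np: "n_p \<ge> 1" and nq: "n_q \<ge> 1"
      and S1: "S1 \<subseteq> V" "card S1 = n_p"
      and a: "a \<in> V"
      and S2: "is_N_in V E0 a n_q S2"
      and eps: "0 \<le> \<epsilon>" "\<epsilon> \<le> 1/2"
      and ecc1: "real (Max ((\<lambda>x. gdist_from_set E1 S1 x) ` V))
                   \<ge> real (Max ((\<lambda>x. gdist_from_set E0 S1 x) ` V)) * (1 - \<epsilon>)"
                "real (Max ((\<lambda>x. gdist_from_set E1 S1 x) ` V))
                   \<le> real (Max ((\<lambda>x. gdist_from_set E0 S1 x) ` V)) * (1 + \<epsilon>)"
      and da1: "real (gdist_from_set E1 S1 a)
                   \<ge> real (Max ((\<lambda>x. gdist_from_set E0 S1 x) ` V)) * (1 - \<epsilon>)"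
               "real (gdist_from_set E1 S1 a)
                   \<le> real (Max ((\<lambda>x. gdist_from_set E0 S1 x) ` V)) * (1 + \<epsilon>)"
      and meet: "S1 \<inter> S2 \<noteq> {}"
      and cases: "(E1 \<subseteq> E0 \<and> real (gdist_from_set E0 S1 a)
                      \<ge> (1 - \<epsilon>) * real (Max ((\<lambda>x. gdist_from_set E0 S1 x) ` V)))
                \<or> (E0 \<subseteq> E1 \<and> real (inecc V E1 a) \<ge> (1 - \<epsilon>) * real (inecc V E0 a))"
  shows "\<forall>p q :: real. p > 0 \<longrightarrow> q > 0 \<longrightarrow> p + q = 1 \<longrightarrow>
           ((\<forall>x\<in>V. int (gdist_from_set E1 S1 x) \<le> \<lfloor>(p + 2 * \<epsilon>) * real (inecc V E1 a)\<rfloor>)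
          \<or> (\<forall>x\<in>V. int (gdist_to_set E1 x S2) \<le> \<lceil>(q + 2 * \<epsilon>) * real (inecc V E1 a)\<rceil>))"
proof (intro allI impI)
  fix p q :: real
  assume pq: "p > 0" "q > 0" "p + q = 1"
  have V: "finite V" "E0 \<subseteq> V \<times> V" using G0(1) unfolding digraph_def by auto
  obtain s where s: "s \<in> S1" "s \<in> S2" using meet by blast
  have "\<forall>y\<in>V. int (gdist_to_set E1 y S2) \<le> \<lceil>(q + 2 * \<epsilon>) * real (inecc V E1 a)\<rceil>"
    if "\<not> (\<forall>x\<in>V. int (gdist_from_set E1 S1 x) \<le> \<lfloor>(p + 2 * \<epsilon>) * real (inecc V E1 a)\<rfloor>)"
  proof -
    have far: "(p + 2 * \<epsilon>) * real (inecc V E1 a) < real (ecc_from_set V E1 S1)"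
      using V(1) that by (rule ecc_from_set_gt_if_not_floor_bound)
    from cases[folded ecc_from_set_def] show ?thesis
    proof (elim disjE conjE)
      assume "E1 \<subseteq> E0" "(1 - \<epsilon>) * real (ecc_from_set V E0 S1) \<le> real (gdist_from_set E0 S1 a)"
      then show ?thesis
        using gdist_to_N_in_bound_edge_deletion[OF V G0(2) G1(2) _ a S2 S1(1) s eps pq(3,2) far
            ecc1(2)[folded ecc_from_set_def]] by blast
    next
      assume "E0 \<subseteq> E1" "(1 - \<epsilon>) * real (inecc V E0 a) \<le> real (inecc V E1 a)"
      then show ?thesis
        using gdist_to_N_in_bound_edge_insertion[OF V G0(2) _ a S2 S1(1) s eps pq(3,2) far
            da1(1)[folded ecc_from_set_def]] by blast
    qed
  qed
  then show "(\<forall>x\<in>V. int (gdist_from_set E1 S1 x) \<le> \<lfloor>(p + 2 * \<epsilon>) * real (inecc V E1 a)\<rfloor>)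
      \<or> (\<forall>x\<in>V. int (gdist_to_set E1 x S2) \<le> \<lceil>(q + 2 * \<epsilon>) * real (inecc V E1 a)\<rceil>)"
    by blast
qed

end
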